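(* There is an absolute constant $C_1>0$ such that the following holds. Let $n\ge 2$, $p\ge 1$, $d\ge 1$, let $(x_1,y_1),\ldots,(x_n,y_n)\in \mathbb{S}^{d-1}\times\{-1,1\}$ be any dataset and let $\theta^{(1)}$ be any initial parameter vector. Set $h=1/p$, $L_1:=L(\theta^{(1)})$, and \[ \widetilde{Q}_1=\min\left\{\frac{1}{30pL_1\log^2(1/L_1)},\ \frac{108\,\lVert V^{(1)}\rVert^2}{125\,L_1\log^4(1/L_1)},\ \frac{e^2}{120p}\right\},\qquad \widetilde{Q}_2(Q_1)=\frac{125\,Q_1L_1\log^4(1/L_1)}{216\,\lVert V^{(1)}\rVert^2}. \] Let $Q_1$ be any positive number with $Q_1\le \widetilde{Q}_1$ and $Q_2$ any positive number with $Q_2\le\widetilde{Q}_2(Q_1)$. Let $\theta^{(t+1)}=\theta^{(t)}-\alpha_t\nabla_\theta L(\theta^{(t)})$ for $t\ge 1$ with step-sizes $\alpha_t=Q_1\log^2(1/L(\theta^{(t)}))$. If $L(\theta^{(1)})\le \frac{1}{n^{1+C_1}}$, then for all $t\ge 1$, \[ L(\theta^{(t)})\le \frac{L(\theta^{(1)})}{Q_2\,(t-1)+1}. \]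
   Context: $\mathbb{S}^{d-1}$ is the set of unit vectors in $\mathbb{R}^d$; $\log$ is the natural logarithm. The Huberized ReLU with bandwidth $h>0$ is $\phi(z)=0$ for $z<0$, $\phi(z)=z^2/(2h)$ for $z\in[0,h]$, $\phi(z)=z-h/2$ for $z>h$. The network has $2p$ hidden units with input weights $v_i\in\mathbb{R}^d$ and biases $b_i\in\mathbb{R}$, $i\in[2p]$; the output weights are fixed (not trained): $u_1=\cdots=u_p=1$, $u_{p+1}=\cdots=u_{2p}=-1$. The trainable parameters are $\theta=(v_1,b_1,\ldots,v_{2p},b_{2p})$ and the network computes $f_\theta(x)=\sum_{i=1}^{2p}u_i\phi(v_i\cdot x+b_i)$. The training loss is $L(\theta)=\frac1n\sum_{s=1}^n\ln(1+\exp(-y_sf_\theta(x_s)))$. $V^{(1)}$ denotes the $2p\times(d+1)$ matrix whose $i$-th row is $(v_i^{(1)},b_i^{(1)})$ formed from the parameters $\theta^{(1)}$, and $\lVert V^{(1)}\rVert$ is its Frobenius norm. *)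

theory Defs
  imports "HOL-Analysis.Analysis"
begin

text \<open>Parameters theta are encoded as a function theta i j :: real, where for a hidden
unit i < 2p the entries j < d are the input weights v_i and entry j = d is the bias b_i.\<close>

definition huber :: "real \<Rightarrow> real \<Rightarrow> real" where
  "huber h z = (if z < 0 then 0 else if z \<le> h then z\<^sup>2 / (2 * h) else z - h / 2)"

definition outw :: "nat \<Rightarrow> nat \<Rightarrow> real" where
  "outw p i = (if i < p then 1 else -1)"

definition net :: "nat \<Rightarrow> nat \<Rightarrow> real \<Rightarrow> (nat \<Rightarrow> nat \<Rightarrow> real) \<Rightarrow> (nat \<Rightarrow> real) \<Rightarrow> real" where
  "net p d h \<theta> x = (\<Sum>i<2*p. outw p i * huber h ((\<Sum>j<d. \<theta> i j * x j) + \<theta> i d))"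

definition loss :: "nat \<Rightarrow> nat \<Rightarrow> nat \<Rightarrow> real \<Rightarrow> (nat \<Rightarrow> nat \<Rightarrow> real) \<Rightarrow> (nat \<Rightarrow> real)
    \<Rightarrow> (nat \<Rightarrow> nat \<Rightarrow> real) \<Rightarrow> real" where
  "loss n p d h X Y \<theta> = (1 / real n) * (\<Sum>s<n. ln (1 + exp (- (Y s) * net p d h \<theta> (X s))))"

text \<open>Partial derivative of a function of the parameters with respect to entry (i,j);
the gradient of L is the array of these partial derivatives (L is C^1).\<close>
definition partial :: "((nat \<Rightarrow> nat \<Rightarrow> real) \<Rightarrow> real) \<Rightarrow> (nat \<Rightarrow> nat \<Rightarrow> real) \<Rightarrow> nat \<Rightarrow> nat \<Rightarrow> real" where
  "partial F \<theta> i j = deriv (\<lambda>s. F (\<theta>(i := (\<theta> i)(j := s)))) (\<theta> i j)"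

text \<open>Frobenius norm of the 2p x (d+1) matrix V whose i-th row is (v_i, b_i).\<close>
definition frob :: "nat \<Rightarrow> nat \<Rightarrow> (nat \<Rightarrow> nat \<Rightarrow> real) \<Rightarrow> real" where
  "frob p d \<theta> = sqrt (\<Sum>i<2*p. \<Sum>j\<le>d. (\<theta> i j)\<^sup>2)"

definition Qt1 :: "nat \<Rightarrow> real \<Rightarrow> real \<Rightarrow> real" where
  "Qt1 p L1 V = Min {1 / (30 * real p * L1 * (ln (1 / L1))\<^sup>2),
                      108 * V\<^sup>2 / (125 * L1 * (ln (1 / L1)) ^ 4),
                      exp 2 / (120 * real p)}"

definition Qt2 :: "real \<Rightarrow> real \<Rightarrow> real \<Rightarrow> real" where
  "Qt2 Q1 L1 V = 125 * Q1 * L1 * (ln (1 / L1)) ^ 4 / (216 * V\<^sup>2)"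

end

theory Submission
  imports Defs
begin

text \<open>
Once L <= n^-100, every margin exceeds 0.95 ln(1/L) + 1; as the Huberized ReLU is homogeneous up
to an error h/2 per neuron, the gradient is then correlated with the parameters:
9/10 L ln(1/L) <= ||theta|| ||grad L||. The step size alpha = Q1 ln^2(1/L) satisfies
p alpha L <= 1/30 (because L ln^2(1/L) <= 4/e^2), so no margin moves by more than 1 and the
logistic loss is smooth along the step: L' <= L - 5/6 alpha ||grad L||^2. Together,
1/L' - 1/L >= 27/40 Q1 ln^4(1/L) / ||theta||^2, while ||theta|| grows by at most
alpha ||grad L||, which keeps ||theta_t|| / ln^2(1/L_t) non-increasing. Hence 1/L_t increases by
at least Q2 / L_1 in every step.
\<close>

definition half_relu_sq :: "real \<Rightarrow> real" where
  "half_relu_sq z = (max 0 z)\<^sup>2 / 2"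

definition dhuber :: "real \<Rightarrow> real \<Rightarrow> real" where
  "dhuber h z = (max 0 z - max 0 (z - h)) / h"

text \<open>The Huberized ReLU is a difference quotient of the convex, 1-smooth function
half_relu_sq; its derivative, Taylor and homogeneity estimates are inherited from it.\<close>

lemma huber_eq_half_relu_sq:
  assumes "h > 0"
  shows "huber h z = (half_relu_sq z - half_relu_sq (z - h)) / h"
  using assms by (auto simp: huber_def half_relu_sq_def field_simps power2_eq_square)

lemma half_relu_sq_has_derivative: "(half_relu_sq has_real_derivative max 0 z) (at z)"
proof (cases z "0::real" rule: linorder_cases)
  case less
  have "\<forall>\<^sub>F w in nhds z. half_relu_sq w = 0"
    using eventually_nhds_in_open[of "{..<0}" z] less
    by (auto elim!: eventually_mono simp: half_relu_sq_def)
  then show ?thesis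
    using less by (subst DERIV_cong_ev[OF refl _ refl]) auto
next
  case equal
  have "half_relu_sq w - half_relu_sq z = max 0 w / 2 * (w - z)" for w
    using equal by (simp add: half_relu_sq_def power2_eq_square max_def)
  then show ?thesis
    unfolding CARAT_DERIV using equal
    by (intro exI[of _ "\<lambda>w. max 0 w / 2"]) (auto intro!: continuous_intros)
next
  case greater
  have ev: "\<forall>\<^sub>F w in nhds z. half_relu_sq w = w\<^sup>2 / 2"
    using eventually_nhds_in_open[of "{0<..}" z] greater
    by (auto elim!: eventually_mono simp: half_relu_sq_def)
  have "((\<lambda>w. w\<^sup>2 / 2) has_real_derivative max 0 z) (at z)"
    using greater by (auto intro!: derivative_eq_intros)
  then show ?thesis
    by (subst DERIV_cong_ev[OF refl ev refl])
qed

lemma half_relu_sq_taylor: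
  shows "0 \<le> half_relu_sq b - half_relu_sq a - max 0 a * (b - a)"
    and "half_relu_sq b - half_relu_sq a - max 0 a * (b - a) \<le> (b - a)\<^sup>2 / 2"
proof -
  have "0 \<le> half_relu_sq b - half_relu_sq a - max 0 a * (b - a) \<and>
        half_relu_sq b - half_relu_sq a - max 0 a * (b - a) \<le> (b - a)\<^sup>2 / 2"
  proof (cases "0 \<le> a"; cases "0 \<le> b")
    assume "0 \<le> a" "0 \<le> b"
    then have "half_relu_sq b - half_relu_sq a - max 0 a * (b - a) = (b - a)\<^sup>2 / 2"
      by (simp add: half_relu_sq_def power2_eq_square algebra_simps)
    then show ?thesis using zero_le_power2[of "b - a"] by linarith
  next
    assume "\<not> 0 \<le> a" "0 \<le> b"
    then have "b\<^sup>2 \<le> (b - a)\<^sup>2" by (intro power_mono) auto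
    then show ?thesis using \<open>\<not> 0 \<le> a\<close> \<open>0 \<le> b\<close> by (simp add: half_relu_sq_def)
  next
    assume "0 \<le> a" "\<not> 0 \<le> b"
    then have "a * (b * 2) \<le> a * a"
      by (smt (verit) mult_nonneg_nonpos mult.assoc mult.commute zero_le_square)
    then show ?thesis using \<open>0 \<le> a\<close> \<open>\<not> 0 \<le> b\<close>
      by (simp add: half_relu_sq_def power2_eq_square algebra_simps)
  qed (simp add: half_relu_sq_def)
  then show "0 \<le> half_relu_sq b - half_relu_sq a - max 0 a * (b - a)"
    and "half_relu_sq b - half_relu_sq a - max 0 a * (b - a) \<le> (b - a)\<^sup>2 / 2" by auto
qed

lemma huber_has_derivative:
  assumes "h > 0"
  shows "(huber h has_real_derivative dhuber h z) (at z)"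
proof -
  have shifted: "((\<lambda>w. half_relu_sq (w - h)) has_real_derivative max 0 (z - h)) (at z)"
    using DERIV_chain2[OF half_relu_sq_has_derivative DERIV_diff[OF DERIV_ident DERIV_const[of h]]]
    by simp
  have "huber h = (\<lambda>w. (half_relu_sq w - half_relu_sq (w - h)) / h)"
    using assms by (simp add: fun_eq_iff huber_eq_half_relu_sq)
  then show ?thesis
    unfolding dhuber_def using DERIV_cdivide[OF DERIV_diff[OF half_relu_sq_has_derivative shifted]]
    by simp
qed

lemmas huber_has_derivative_chain [derivative_intros] = DERIV_chain2[OF huber_has_derivative]

lemma dhuber_nonneg: "h > 0 \<Longrightarrow> 0 \<le> dhuber h z"
  and dhuber_le_one: "h > 0 \<Longrightarrow> dhuber h z \<le> 1"
  by (auto simp: dhuber_def max_def field_simps)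

lemma huber_taylor:
  assumes "h > 0"
  shows "\<bar>huber h b - huber h a - dhuber h a * (b - a)\<bar> \<le> (b - a)\<^sup>2 / (2 * h)"
proof -
  define E where "E a b = half_relu_sq b - half_relu_sq a - max 0 a * (b - a)" for a b
  have "huber h b - huber h a - dhuber h a * (b - a) = (E a b - E (a - h) (b - h)) / h"
    using assms by (simp add: huber_eq_half_relu_sq dhuber_def E_def field_simps)
  then have "\<bar>huber h b - huber h a - dhuber h a * (b - a)\<bar> = \<bar>E a b - E (a - h) (b - h)\<bar> / h"
    using assms by simp
  also have "\<dots> \<le> (b - a)\<^sup>2 / 2 / h"
  proof (rule divide_right_mono)
    have "0 \<le> E a b" "E a b \<le> (b - a)\<^sup>2 / 2"
      "0 \<le> E (a - h) (b - h)" "E (a - h) (b - h) \<le> (b - a)\<^sup>2 / 2"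
      using half_relu_sq_taylor[where a = a and b = b] half_relu_sq_taylor[where a = "a - h" and b = "b - h"]
      by (simp_all add: E_def)
    then show "\<bar>E a b - E (a - h) (b - h)\<bar> \<le> (b - a)\<^sup>2 / 2" by linarith
  qed (use assms in simp)
  finally show ?thesis by simp
qed

lemma huber_lipschitz:
  assumes "h > 0"
  shows "\<bar>huber h b - huber h a\<bar> \<le> \<bar>b - a\<bar>"
proof -
  have *: "\<bar>huber h v - huber h u\<bar> \<le> \<bar>v - u\<bar>" if uv: "u < v" for u v
  proof -
    obtain z where "huber h v - huber h u = (v - u) * dhuber h z"
      using MVT2[OF uv, of "huber h" "dhuber h"] huber_has_derivative[OF assms] by blast
    then show ?thesis
      using dhuber_nonneg[OF assms, of z] dhuber_le_one[OF assms, of z] uv by (simp add: abs_mult)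
  qed
  show ?thesis
    by (cases a b rule: linorder_cases) (use *[of a b] *[of b a] in \<open>auto simp: abs_minus_commute\<close>)
qed

lemma dhuber_mult_self_minus_huber:
  assumes "h > 0"
  shows "\<bar>dhuber h z * z - huber h z\<bar> \<le> h / 2"
proof -
  consider "z < 0" | "0 \<le> z" "z \<le> h" | "h < z" by linarith
  then show ?thesis
  proof cases
    case 2
    then have "z\<^sup>2 \<le> h\<^sup>2" by (intro power_mono) auto
    then show ?thesis
      using 2 assms by (simp add: dhuber_def huber_def field_simps power2_eq_square)
  qed (use assms in \<open>auto simp: dhuber_def huber_def field_simps\<close>)
qed

definition logistic_loss :: "real \<Rightarrow> real" where
  "logistic_loss m = ln (1 + exp (- m))"

definition logistic_weight :: "real \<Rightarrow> real" where
  "logistic_weight m = exp (- m) / (1 + exp (- m))"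

lemma logistic_loss_pos: "0 < logistic_loss m"
  unfolding logistic_loss_def by (intro ln_gt_zero) simp

lemma logistic_weight_nonneg: "0 \<le> logistic_weight m"
  unfolding logistic_weight_def by (simp add: add_pos_pos less_imp_le)

lemma logistic_loss_has_derivative:
  "(logistic_loss has_real_derivative - logistic_weight m) (at m)"
  unfolding logistic_loss_def logistic_weight_def
  by (auto intro!: derivative_eq_intros simp: add_pos_pos)

lemmas logistic_loss_has_derivative_chain [derivative_intros] =
  DERIV_chain2[OF logistic_loss_has_derivative]

lemma logistic_weight_le_loss: "logistic_weight m \<le> logistic_loss m"
proof -
  define y where "y = exp (- m)"
  have y: "y > 0" by (simp add: y_def)
  have "ln (1 / (1 + y)) \<le> 1 / (1 + y) - 1" using y by (intro ln_le_minus_one) simp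
  then have "- ln (1 + y) \<le> - (y / (1 + y))" using y by (simp add: ln_div field_simps)
  then show ?thesis unfolding logistic_weight_def logistic_loss_def y_def[symmetric] by simp
qed

lemma logistic_loss_le_weight: "logistic_loss m / (1 + exp (- m)) \<le> logistic_weight m"
  unfolding logistic_weight_def logistic_loss_def
  by (intro divide_right_mono ln_add_one_self_le_self) (auto simp: add_pos_pos less_imp_le)

lemma exp_le_one_plus_self_plus_square:
  fixes x :: real
  assumes "x \<le> 1"
  shows "exp x \<le> 1 + x + x\<^sup>2"
proof (cases "0 \<le> x")
  case True
  then show ?thesis using exp_bound[of x] assms by simp
next
  case False
  have "1 - x \<le> exp (- x)" using exp_ge_add_one_self[of "- x"] by simp
  then have "exp x \<le> 1 / (1 - x)" using False by (simp add: exp_minus field_simps)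
  also have "\<dots> \<le> 1 + x + x\<^sup>2"
  proof -
    have "(1 - x) * (1 + x + x\<^sup>2) = 1 - x * x\<^sup>2" by (simp add: algebra_simps power2_eq_square)
    moreover have "x * x\<^sup>2 \<le> 0" using False by (simp add: mult_nonpos_nonneg)
    ultimately show ?thesis using False by (simp add: field_simps)
  qed
  finally show ?thesis .
qed

lemma logistic_loss_step:
  assumes "- \<delta> \<le> 1"
  shows "logistic_loss (m + \<delta>) - logistic_loss m \<le> logistic_weight m * (- \<delta> + \<delta>\<^sup>2)"
proof -
  define w where "w = logistic_weight m"
  have "0 < 1 + exp (- m)" by (simp add: add_pos_pos)
  moreover have "exp (- (m + \<delta>)) = exp (- m) * exp (- \<delta>)" by (simp flip: exp_add)
  ultimately have ratio: "(1 + exp (- (m + \<delta>))) / (1 + exp (- m)) = 1 + w * (exp (- \<delta>) - 1)"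
    by (simp add: w_def logistic_weight_def field_simps)
  have "0 < 1 + w * (exp (- \<delta>) - 1)"
    unfolding ratio[symmetric] by (simp add: add_pos_pos)
  have "logistic_loss (m + \<delta>) - logistic_loss m = ln (1 + w * (exp (- \<delta>) - 1))"
    unfolding logistic_loss_def ratio[symmetric] using exp_gt_zero
    by (simp add: ln_div add_nonneg_eq_0_iff)
  also have "\<dots> \<le> w * (exp (- \<delta>) - 1)"
    using \<open>0 < 1 + w * (exp (- \<delta>) - 1)\<close> ln_le_minus_one by fastforce
  also have "\<dots> \<le> w * (- \<delta> + \<delta>\<^sup>2)"
    using exp_le_one_plus_self_plus_square[OF assms] logistic_weight_nonneg[of m]
    by (intro mult_left_mono) (auto simp: w_def)
  finally show ?thesis by (simp add: w_def)
qed

lemma exp_neg_le_of_logistic_loss_le: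
  assumes "logistic_loss m \<le> \<epsilon>" and "\<epsilon> \<le> 1"
  shows "exp (- m) \<le> 2 * \<epsilon>"
proof -
  have "0 \<le> \<epsilon>" using logistic_loss_pos[of m] assms(1) by linarith
  have "1 + exp (- m) = exp (logistic_loss m)"
    by (simp add: logistic_loss_def add_pos_pos)
  also have "\<dots> \<le> exp \<epsilon>" using assms(1) by simp
  also have "\<dots> \<le> 1 + \<epsilon> + \<epsilon>\<^sup>2" using exp_bound \<open>0 \<le> \<epsilon>\<close> assms(2) by blast
  also have "\<dots> \<le> 1 + 2 * \<epsilon>" using \<open>0 \<le> \<epsilon>\<close> assms(2) by (simp add: power2_eq_square mult_left_le_one_le)
  finally show ?thesis by simp
qed

lemma logistic_loss_le_weight_mult_margin:
  assumes "logistic_loss m \<le> \<epsilon>" and "\<epsilon> \<le> 1/50"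
    and "0 \<le> c" and "95/100 * c \<le> m - 1"
  shows "9/10 * c * logistic_loss m \<le> logistic_weight m * (m - 1)"
proof -
  have "0 \<le> \<epsilon>" using logistic_loss_pos[of m] assms(1) by linarith
  have "exp (- m) \<le> 2 * \<epsilon>" using exp_neg_le_of_logistic_loss_le assms(1,2) by simp
  then have "logistic_loss m / (1 + 2 * \<epsilon>) \<le> logistic_loss m / (1 + exp (- m))"
    using logistic_loss_pos[of m] \<open>0 \<le> \<epsilon>\<close> by (intro divide_left_mono) (auto simp: add_pos_pos)
  also have "\<dots> \<le> logistic_weight m" by (rule logistic_loss_le_weight)
  finally have weight: "logistic_loss m / (1 + 2 * \<epsilon>) \<le> logistic_weight m" .
  have "9/10 * (1 + 2 * \<epsilon>) * (c * logistic_loss m) \<le> 95/100 * (c * logistic_loss m)"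
    using assms(2,3) logistic_loss_pos[of m] by (intro mult_right_mono) auto
  then have "9/10 * c * logistic_loss m \<le> logistic_loss m / (1 + 2 * \<epsilon>) * (95/100 * c)"
    using \<open>0 \<le> \<epsilon>\<close> by (simp add: field_simps)
  also have "\<dots> \<le> logistic_weight m * (m - 1)"
    using weight assms(3,4) logistic_weight_nonneg by (intro mult_mono) auto
  finally show ?thesis .
qed

definition param_inner :: "nat \<Rightarrow> nat \<Rightarrow> (nat \<Rightarrow> nat \<Rightarrow> real) \<Rightarrow> (nat \<Rightarrow> nat \<Rightarrow> real) \<Rightarrow> real" where
  "param_inner p d a b = (\<Sum>i<2*p. \<Sum>j\<le>d. a i j * b i j)"

lemma frob_nonneg [simp]: "0 \<le> frob p d a"
  unfolding frob_def by (simp add: sum_nonneg)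

lemma frob_square: "(frob p d a)\<^sup>2 = (\<Sum>i<2*p. \<Sum>j\<le>d. (a i j)\<^sup>2)"
  unfolding frob_def by (simp add: sum_nonneg)

lemma param_inner_self: "param_inner p d a a = (frob p d a)\<^sup>2"
  unfolding frob_square param_inner_def by (simp add: power2_eq_square)

lemma frob_eq_L2_set: "frob p d a = L2_set (\<lambda>(i, j). a i j) ({..<2*p} \<times> {..d})"
  unfolding frob_def L2_set_def by (simp add: sum.cartesian_product case_prod_beta)

lemma abs_param_inner_le: "\<bar>param_inner p d a b\<bar> \<le> frob p d a * frob p d b"
proof -
  have "\<bar>param_inner p d a b\<bar> \<le> (\<Sum>(i, j)\<in>{..<2*p} \<times> {..d}. \<bar>a i j\<bar> * \<bar>b i j\<bar>)"
    unfolding param_inner_def sum.cartesian_product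
    by (rule order_trans[OF sum_abs]) (simp add: case_prod_beta abs_mult)
  also have "\<dots> \<le> frob p d a * frob p d b"
    unfolding frob_eq_L2_set using L2_set_mult_ineq[of "\<lambda>(i, j). a i j" "\<lambda>(i, j). b i j"]
    by (simp add: case_prod_beta)
  finally show ?thesis .
qed

lemma frob_gradient_step_le:
  assumes "\<forall>i<2*p. \<forall>j\<le>d. \<theta>' i j = \<theta> i j - \<alpha> * g i j" and "0 \<le> \<alpha>"
  shows "frob p d \<theta>' \<le> frob p d \<theta> + \<alpha> * frob p d g"
proof -
  let ?I = "{..<2*p} \<times> {..d}"
  have "frob p d \<theta>' = L2_set (\<lambda>x. (\<lambda>(i, j). \<theta> i j) x + (\<lambda>(i, j). - (\<alpha> * g i j)) x) ?I"
    unfolding frob_eq_L2_set using assms(1) by (intro L2_set_cong) auto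
  also have "\<dots> \<le> frob p d \<theta> + L2_set (\<lambda>(i, j). - (\<alpha> * g i j)) ?I"
    unfolding frob_eq_L2_set by (rule L2_set_triangle_ineq)
  also have "L2_set (\<lambda>(i, j). - (\<alpha> * g i j)) ?I = \<alpha> * frob p d g"
    unfolding frob_eq_L2_set L2_set_right_distrib[OF assms(2)]
    by (simp add: L2_set_def case_prod_beta)
  finally show ?thesis .
qed

lemma gradient_step_diff:
  assumes "\<forall>i<2*p. \<forall>j\<le>d. \<theta>' i j = \<theta> i j - \<alpha> * g i j" and "0 \<le> \<alpha>"
  shows "frob p d (\<lambda>i j. \<theta>' i j - \<theta> i j) = \<alpha> * frob p d g"
    and "param_inner p d a (\<lambda>i j. \<theta>' i j - \<theta> i j) = - \<alpha> * param_inner p d a g"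
proof -
  have "(frob p d (\<lambda>i j. \<theta>' i j - \<theta> i j))\<^sup>2 = (\<alpha> * frob p d g)\<^sup>2"
    unfolding frob_square power_mult_distrib using assms(1)
    by (simp add: sum_distrib_left power_mult_distrib)
  then show "frob p d (\<lambda>i j. \<theta>' i j - \<theta> i j) = \<alpha> * frob p d g"
    using assms(2) by (simp add: power2_eq_iff_nonneg)
  show "param_inner p d a (\<lambda>i j. \<theta>' i j - \<theta> i j) = - \<alpha> * param_inner p d a g"
    unfolding param_inner_def using assms(1) by (simp add: sum_distrib_left sum_negf mult_ac)
qed

text \<open>Inputs are augmented by a constant coordinate 1 at index d, which carries the bias.\<close>

definition aug_input :: "nat \<Rightarrow> (nat \<Rightarrow> real) \<Rightarrow> nat \<Rightarrow> real" where
  "aug_input d x j = (if j < d then x j else if j = d then 1 else 0)"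

definition preact :: "nat \<Rightarrow> (nat \<Rightarrow> nat \<Rightarrow> real) \<Rightarrow> nat \<Rightarrow> (nat \<Rightarrow> real) \<Rightarrow> real" where
  "preact d \<theta> i x = (\<Sum>j\<le>d. \<theta> i j * aug_input d x j)"

lemma net_eq_preact: "net p d h \<theta> x = (\<Sum>i<2*p. outw p i * huber h (preact d \<theta> i x))"
proof -
  have "(\<Sum>j<d. \<theta> i j * x j) + \<theta> i d = preact d \<theta> i x" for i
    unfolding preact_def aug_input_def lessThan_Suc_atMost[symmetric] by (simp add: sum.lessThan_Suc)
  then show ?thesis unfolding net_def by simp
qed

lemma preact_diff: "preact d \<theta>' i x - preact d \<theta> i x = preact d (\<lambda>i j. \<theta>' i j - \<theta> i j) i x"
  unfolding preact_def by (simp add: sum_subtractf left_diff_distrib)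

lemma sum_aug_input_sq:
  assumes "(\<Sum>j<d. (x j)\<^sup>2) = 1"
  shows "(\<Sum>j\<le>d. (aug_input d x j)\<^sup>2) = 2"
proof -
  have "(\<Sum>j<d. (aug_input d x j)\<^sup>2) = (\<Sum>j<d. (x j)\<^sup>2)"
    by (intro sum.cong) (auto simp: aug_input_def)
  then show ?thesis
    using assms by (simp add: lessThan_Suc_atMost[symmetric] aug_input_def)
qed

lemma sum_preact_sq_le:
  assumes "(\<Sum>j<d. (x j)\<^sup>2) = 1"
  shows "(\<Sum>i<2*p. (preact d a i x)\<^sup>2) \<le> 2 * (frob p d a)\<^sup>2"
proof -
  have "(preact d a i x)\<^sup>2 \<le> (\<Sum>j\<le>d. (a i j)\<^sup>2) * 2" for i
    using Cauchy_Schwarz_ineq_sum[of "a i" "aug_input d x" "{..d}"] sum_aug_input_sq[OF assms]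
    by (simp add: preact_def)
  then have "(\<Sum>i<2*p. (preact d a i x)\<^sup>2) \<le> (\<Sum>i<2*p. (\<Sum>j\<le>d. (a i j)\<^sup>2) * 2)"
    by (rule sum_mono)
  then show ?thesis
    unfolding frob_square by (simp add: sum_distrib_left mult.commute)
qed

lemma preact_fun_upd:
  "preact d (\<theta>(i := (\<theta> i)(j := v))) k x =
     preact d \<theta> k x + (if k = i then (v - \<theta> i j) * aug_input d x j else 0)"
proof -
  have "preact d (\<theta>(i := (\<theta> i)(j := v))) k x =
      (\<Sum>l\<le>d. \<theta> k l * aug_input d x l + (if k = i \<and> l = j then (v - \<theta> i j) * aug_input d x j else 0))"
    unfolding preact_def by (intro sum.cong) (auto simp: algebra_simps)
  then show ?thesis
    by (simp add: sum.distrib preact_def aug_input_def)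
qed

lemma net_fun_upd:
  assumes "i < 2 * p"
  shows "net p d h (\<theta>(i := (\<theta> i)(j := v))) x = net p d h \<theta> x +
    outw p i * (huber h (preact d \<theta> i x + (v - \<theta> i j) * aug_input d x j) - huber h (preact d \<theta> i x))"
proof -
  have "net p d h (\<theta>(i := (\<theta> i)(j := v))) x = (\<Sum>k<2*p. outw p k * huber h (preact d \<theta> k x) +
      (if k = i then outw p i * (huber h (preact d \<theta> i x + (v - \<theta> i j) * aug_input d x j)
                                  - huber h (preact d \<theta> i x)) else 0))"
    unfolding net_eq_preact preact_fun_upd by (intro sum.cong) (auto simp: algebra_simps)
  then show ?thesis
    using assms by (simp add: sum.distrib net_eq_preact)
qed

lemma abs_outw [simp]: "\<bar>outw p i\<bar> = 1"
  by (simp add: outw_def)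

definition margin_grad :: "nat \<Rightarrow> nat \<Rightarrow> real \<Rightarrow> (nat \<Rightarrow> nat \<Rightarrow> real) \<Rightarrow> (nat \<Rightarrow> real) \<Rightarrow> real
    \<Rightarrow> nat \<Rightarrow> nat \<Rightarrow> real" where
  "margin_grad p d h \<theta> x y i j = y * outw p i * dhuber h (preact d \<theta> i x) * aug_input d x j"

definition loss_grad :: "nat \<Rightarrow> nat \<Rightarrow> nat \<Rightarrow> real \<Rightarrow> (nat \<Rightarrow> nat \<Rightarrow> real) \<Rightarrow> (nat \<Rightarrow> real)
    \<Rightarrow> (nat \<Rightarrow> nat \<Rightarrow> real) \<Rightarrow> nat \<Rightarrow> nat \<Rightarrow> real" where
  "loss_grad n p d h X Y \<theta> i j = - (1 / real n) *
     (\<Sum>s<n. logistic_weight (Y s * net p d h \<theta> (X s)) * margin_grad p d h \<theta> (X s) (Y s) i j)"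

lemma loss_eq_mean_logistic_loss:
  "loss n p d h X Y \<theta> = (1 / real n) * (\<Sum>s<n. logistic_loss (Y s * net p d h \<theta> (X s)))"
  unfolding loss_def logistic_loss_def by simp

lemma partial_loss_eq_loss_grad:
  assumes "h > 0" and "i < 2 * p"
  shows "partial (loss n p d h X Y) \<theta> i j = loss_grad n p d h X Y \<theta> i j"
proof -
  define z where "z s = preact d \<theta> i (X s)" for s
  define c where "c s = aug_input d (X s) j" for s
  \<comment> \<open>naming 1 / real n keeps the derivative rules from demanding n \<noteq> 0\<close>
  define \<kappa> where "\<kappa> = 1 / real n"
  have "((\<lambda>v. loss n p d h X Y (\<theta>(i := (\<theta> i)(j := v)))) has_real_derivative loss_grad n p d h X Y \<theta> i j)
      (at (\<theta> i j))"
    unfolding loss_eq_mean_logistic_loss net_fun_upd[OF assms(2)] loss_grad_def margin_grad_def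
      z_def[symmetric] c_def[symmetric] \<kappa>_def[symmetric]
    by (auto intro!: derivative_eq_intros simp: assms(1) sum_negf mult_ac)
  then show ?thesis
    unfolding partial_def by (rule DERIV_imp_deriv)
qed

lemma param_inner_margin_grad:
  "param_inner p d (margin_grad p d h \<theta> x y) a =
     y * (\<Sum>i<2*p. outw p i * dhuber h (preact d \<theta> i x) * preact d a i x)"
  unfolding param_inner_def margin_grad_def preact_def[of d a]
  by (simp add: sum_distrib_left sum_distrib_right mult_ac)

lemma frob_margin_grad_le:
  assumes "h > 0" and "(\<Sum>j<d. (x j)\<^sup>2) = 1" and "\<bar>y\<bar> = 1"
  shows "frob p d (margin_grad p d h \<theta> x y) \<le> 2 * sqrt (real p)"
proof -
  have "y\<^sup>2 * (outw p i)\<^sup>2 = 1" for i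
  proof -
    have "y\<^sup>2 * (outw p i)\<^sup>2 = \<bar>y * outw p i\<bar>\<^sup>2" by (simp add: power_mult_distrib)
    also have "\<dots> = 1" using assms(3) by (simp add: abs_mult)
    finally show ?thesis .
  qed
  then have "(frob p d (margin_grad p d h \<theta> x y))\<^sup>2 =
      (\<Sum>i<2*p. (dhuber h (preact d \<theta> i x))\<^sup>2 * (\<Sum>j\<le>d. (aug_input d x j)\<^sup>2))"
    unfolding frob_square margin_grad_def power_mult_distrib by (simp add: sum_distrib_left)
  also have "\<dots> = (\<Sum>i<2*p. (dhuber h (preact d \<theta> i x))\<^sup>2 * 2)"
    by (simp add: sum_aug_input_sq[OF assms(2)])
  also have "\<dots> \<le> (\<Sum>i<2*p. 2)"
    using dhuber_nonneg[OF assms(1)] dhuber_le_one[OF assms(1)]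
    by (intro sum_mono) (simp add: power_le_one)
  also have "\<dots> = (2 * sqrt (real p))\<^sup>2" by (simp add: power_mult_distrib)
  finally show ?thesis by (rule power2_le_imp_le) simp
qed

lemma margin_le_param_inner_margin_grad:
  assumes "h > 0" and "\<bar>y\<bar> = 1"
  shows "y * net p d h \<theta> x - real p * h \<le> param_inner p d (margin_grad p d h \<theta> x y) \<theta>"
proof -
  define z where "z i = preact d \<theta> i x" for i
  have "param_inner p d (margin_grad p d h \<theta> x y) \<theta> - y * net p d h \<theta> x =
      (\<Sum>i<2*p. (y * outw p i) * (dhuber h (z i) * z i - huber h (z i)))"
    unfolding param_inner_margin_grad net_eq_preact z_def[symmetric]
    by (simp add: sum_distrib_left sum_subtractf[symmetric] algebra_simps)
  also have "\<dots> \<ge> (\<Sum>i<2*p. - (h / 2))"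
  proof (intro sum_mono)
    fix i
    have "\<bar>(y * outw p i) * (dhuber h (z i) * z i - huber h (z i))\<bar> \<le> h / 2"
      using dhuber_mult_self_minus_huber[OF assms(1)] assms(2) by (simp add: abs_mult)
    then show "- (h / 2) \<le> (y * outw p i) * (dhuber h (z i) * z i - huber h (z i))"
      by (simp add: abs_le_iff)
  qed
  ultimately show ?thesis by simp
qed

lemma margin_taylor:
  assumes "h > 0" and "(\<Sum>j<d. (x j)\<^sup>2) = 1" and "\<bar>y\<bar> = 1"
  shows "\<bar>y * net p d h \<theta>' x - y * net p d h \<theta> x
           - param_inner p d (margin_grad p d h \<theta> x y) (\<lambda>i j. \<theta>' i j - \<theta> i j)\<bar>
         \<le> (frob p d (\<lambda>i j. \<theta>' i j - \<theta> i j))\<^sup>2 / h"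
proof -
  define z where "z i = preact d \<theta> i x" for i
  define e where "e i = preact d (\<lambda>i j. \<theta>' i j - \<theta> i j) i x" for i
  have "preact d \<theta>' i x = z i + e i" for i
    using preact_diff[of d \<theta>' i x \<theta>] by (simp add: z_def e_def)
  moreover have "(\<Sum>i<2*p. outw p i * (huber h (z i + e i) - huber h (z i) - dhuber h (z i) * e i)) =
      (\<Sum>i<2*p. outw p i * huber h (z i + e i)) - (\<Sum>i<2*p. outw p i * huber h (z i))
      - (\<Sum>i<2*p. outw p i * dhuber h (z i) * e i)"
    by (simp add: sum_subtractf right_diff_distrib mult_ac)
  ultimately have "y * net p d h \<theta>' x - y * net p d h \<theta> x
        - param_inner p d (margin_grad p d h \<theta> x y) (\<lambda>i j. \<theta>' i j - \<theta> i j)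
      = y * (\<Sum>i<2*p. outw p i * (huber h (z i + e i) - huber h (z i) - dhuber h (z i) * e i))"
    unfolding param_inner_margin_grad net_eq_preact z_def[symmetric] e_def[symmetric]
    by (simp add: right_diff_distrib)
  also have "\<bar>\<dots>\<bar> \<le> (\<Sum>i<2*p. \<bar>huber h (z i + e i) - huber h (z i) - dhuber h (z i) * e i\<bar>)"
    using assms(3) by (simp add: abs_mult sum_abs[THEN order_trans])
  also have "\<dots> \<le> (\<Sum>i<2*p. (e i)\<^sup>2 / (2 * h))"
  proof (rule sum_mono)
    fix i
    show "\<bar>huber h (z i + e i) - huber h (z i) - dhuber h (z i) * e i\<bar> \<le> (e i)\<^sup>2 / (2 * h)"
      using huber_taylor[OF assms(1), where a = "z i" and b = "z i + e i"] by simp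
  qed
  also have "\<dots> = (\<Sum>i<2*p. (e i)\<^sup>2) / (2 * h)"
    by (simp add: sum_divide_distrib)
  also have "\<dots> \<le> (2 * (frob p d (\<lambda>i j. \<theta>' i j - \<theta> i j))\<^sup>2) / (2 * h)"
    unfolding e_def using assms(1) by (intro divide_right_mono sum_preact_sq_le assms(2)) simp
  finally show ?thesis using assms(1) by simp
qed

lemma margin_lipschitz:
  assumes "h > 0" and "(\<Sum>j<d. (x j)\<^sup>2) = 1" and "\<bar>y\<bar> = 1"
  shows "\<bar>y * net p d h \<theta>' x - y * net p d h \<theta> x\<bar> \<le> 2 * sqrt (real p) * frob p d (\<lambda>i j. \<theta>' i j - \<theta> i j)"
proof -
  define e where "e i = preact d (\<lambda>i j. \<theta>' i j - \<theta> i j) i x" for i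
  have "preact d \<theta>' i x = preact d \<theta> i x + e i" for i
    using preact_diff[of d \<theta>' i x \<theta>] by (simp add: e_def)
  then have "\<bar>y * net p d h \<theta>' x - y * net p d h \<theta> x\<bar> \<le>
      (\<Sum>i<2*p. \<bar>huber h (preact d \<theta> i x + e i) - huber h (preact d \<theta> i x)\<bar>)"
    using assms(3) unfolding net_eq_preact
    by (simp add: abs_mult sum_subtractf[symmetric] right_diff_distrib[symmetric] sum_abs[THEN order_trans])
  also have "\<dots> \<le> (\<Sum>i<2*p. \<bar>e i\<bar>)"
    using huber_lipschitz[OF assms(1)] by (intro sum_mono) (metis add_diff_cancel_left')
  also have "\<dots> \<le> 2 * sqrt (real p) * frob p d (\<lambda>i j. \<theta>' i j - \<theta> i j)"
  proof (rule power2_le_imp_le)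
    have "(\<Sum>i<2*p. 1 * \<bar>e i\<bar>)\<^sup>2 \<le> (\<Sum>i<2*p. 1\<^sup>2) * (\<Sum>i<2*p. \<bar>e i\<bar>\<^sup>2)"
      by (rule Cauchy_Schwarz_ineq_sum)
    also have "\<dots> = real (2 * p) * (\<Sum>i<2*p. (e i)\<^sup>2)" by simp
    also have "\<dots> \<le> real (2 * p) * (2 * (frob p d (\<lambda>i j. \<theta>' i j - \<theta> i j))\<^sup>2)"
      using sum_preact_sq_le[OF assms(2), where p = p and a = "\<lambda>i j. \<theta>' i j - \<theta> i j"]
      by (intro mult_left_mono) (simp_all add: e_def)
    finally show "(\<Sum>i<2*p. \<bar>e i\<bar>)\<^sup>2 \<le> (2 * sqrt (real p) * frob p d (\<lambda>i j. \<theta>' i j - \<theta> i j))\<^sup>2"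
      by (simp add: power_mult_distrib)
  qed simp
  finally show ?thesis .
qed

lemma small_loss_bounds:
  fixes L :: real
  assumes "2 \<le> n" and "0 < L" and "L \<le> 1 / real n powr 100"
  shows "real n * L \<le> 1/50" and "L < 1" and "ln (2 * (real n * L)) + 1 \<le> - (95/100) * ln (1 / L)"
proof -
  have "ln L \<le> ln (1 / real n powr 100)"
    using assms by (subst ln_le_cancel_iff) auto
  then have lam: "100 * ln (real n) \<le> ln (1 / L)"
    using assms(1,2) by (simp add: ln_div ln_realpow)
  have "ln 2 \<le> ln (real n)"
    using assms(1) by simp
  then have "2/3 \<le> ln (real n)"
    using ln2_ge_two_thirds by linarith
  moreover have "ln (2::real) \<le> 1" using ln_2_less_1 by simp
  moreover have ln_nL: "ln (real n * L) = ln (real n) - ln (1 / L)"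
    using assms(1,2) by (simp add: ln_mult ln_div)
  ultimately have "ln (real n * L) \<le> - 66" and "ln 2 + ln (real n * L) + 1 \<le> - (95/100) * ln (1 / L)"
    using lam by linarith+
  then show "ln (2 * (real n * L)) + 1 \<le> - (95/100) * ln (1 / L)"
    using assms(1,2) by (simp add: ln_mult)
  have "real n * L = exp (ln (real n * L))"
    using assms(1,2) by simp
  also have "\<dots> \<le> exp (- 66)"
    using \<open>ln (real n * L) \<le> - 66\<close> by simp
  also have "\<dots> \<le> 1/50"
    using exp_ge_add_one_self[of 66] by (simp add: exp_minus field_simps)
  finally show "real n * L \<le> 1/50" .
  moreover have "L \<le> real n * L"
    using mult_right_mono[of 1 "real n" L] assms(1,2) by simp
  ultimately show "L < 1" by simp
qed

lemma mult_ln_inverse_sq_le: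
  fixes L :: real
  assumes "0 < L" and "L \<le> 1"
  shows "L * (ln (1 / L))\<^sup>2 \<le> 4 * exp (- 2)"
proof -
  define y where "y = ln (1 / L)"
  have "0 \<le> y" and L: "L = exp (- y)"
    using assms by (simp_all add: y_def ln_div)
  have "y / 2 \<le> exp (y / 2 - 1)"
    using exp_ge_add_one_self[of "y / 2 - 1"] by simp
  then have "(y / 2)\<^sup>2 \<le> (exp (y / 2 - 1))\<^sup>2"
    using \<open>0 \<le> y\<close> by (intro power_mono) auto
  then have "y\<^sup>2 \<le> 4 * exp (y - 2)"
    by (simp add: power_divide power2_eq_square flip: exp_add)
  then have "exp (- y) * y\<^sup>2 \<le> exp (- y) * (4 * exp (y - 2))"
    by (intro mult_left_mono) auto
  also have "exp (- y) * (4 * exp (y - 2)) = 4 * exp (- 2)"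
    by (simp add: mult.left_commute flip: exp_add)
  also have "exp (- y) * y\<^sup>2 = L * (ln (1 / L))\<^sup>2"
    by (simp only: y_def[symmetric] L[symmetric])
  finally show ?thesis .
qed

lemma inverse_loss_increment:
  fixes L L' \<alpha> s \<rho> lam Q1 :: real
  assumes "0 < L'" and descent: "L' \<le> L - 5/6 * \<alpha> * s\<^sup>2" and "\<alpha> = Q1 * lam\<^sup>2" and "0 \<le> Q1"
    and lower: "9/10 * L * lam \<le> \<rho> * s" and "0 < \<rho>" and "0 \<le> lam"
  shows "27/40 * Q1 * lam ^ 4 / \<rho>\<^sup>2 \<le> 1 / L' - 1 / L"
proof -
  have "0 \<le> \<alpha> * s\<^sup>2" using assms(3,4) by simp
  then have "L' \<le> L" using descent by linarith
  then have "0 < L" using assms(1) by linarith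
  have "(9/10 * L * lam / \<rho>)\<^sup>2 \<le> s\<^sup>2"
    using lower \<open>0 < \<rho>\<close> \<open>0 < L\<close> \<open>0 \<le> lam\<close> by (intro power_mono) (auto simp: field_simps)
  then have "5/6 * \<alpha> * (81/100 * L\<^sup>2 * lam\<^sup>2 / \<rho>\<^sup>2) \<le> 5/6 * \<alpha> * s\<^sup>2"
    using assms(3,4) by (intro mult_left_mono) (auto simp: power_divide power_mult_distrib)
  then have "27/40 * Q1 * lam ^ 4 / \<rho>\<^sup>2 \<le> (L - L') / L\<^sup>2"
    using descent \<open>0 < L\<close> assms(3) by (simp add: field_simps power2_eq_square power4_eq_xxxx)
  also have "\<dots> \<le> (L - L') / (L * L')"
    using \<open>0 < L'\<close> \<open>L' \<le> L\<close> by (intro divide_left_mono mult_left_mono) (auto simp: power2_eq_square)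
  also have "\<dots> = 1 / L' - 1 / L"
    using \<open>0 < L'\<close> \<open>0 < L\<close> by (simp add: field_simps)
  finally show ?thesis .
qed

lemma relative_decrease_le_ln_inverse_diff:
  fixes L L' :: real
  assumes "0 < L'" and "0 < L"
  shows "(L - L') / L \<le> ln (1 / L') - ln (1 / L)"
proof -
  have "ln (L' / L) \<le> L' / L - 1"
    using assms by (intro ln_le_minus_one) simp
  then show ?thesis
    using assms by (simp add: ln_div diff_divide_distrib)
qed

lemma ln_inverse_sq_growth:
  fixes L L' \<alpha> s \<rho> \<rho>' :: real
  assumes "0 < L'" and "L < 1" and descent: "L' \<le> L - 5/6 * \<alpha> * s\<^sup>2" and "0 \<le> \<alpha>" and "0 \<le> s"
    and lower: "9/10 * L * ln (1 / L) \<le> \<rho> * s" and norm: "\<rho>' \<le> \<rho> + \<alpha> * s" and "0 \<le> \<rho>"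
  shows "\<rho>' * (ln (1 / L))\<^sup>2 \<le> \<rho> * (ln (1 / L'))\<^sup>2"
proof -
  define lam where "lam = ln (1 / L)"
  define \<delta> where "\<delta> = (L - L') / (L * lam)"
  have "0 \<le> \<alpha> * s\<^sup>2" using assms(4) by simp
  then have "L' \<le> L" using descent by linarith
  then have "0 < L" using assms(1) by linarith
  then have "0 < lam" using assms(2) by (simp add: lam_def ln_div)
  have "0 \<le> \<delta>" using \<open>L' \<le> L\<close> \<open>0 < L\<close> \<open>0 < lam\<close> by (simp add: \<delta>_def)
  have "lam * (1 + \<delta>) = lam + (L - L') / L"
    using \<open>0 < L\<close> \<open>0 < lam\<close> by (simp add: \<delta>_def field_simps)
  also have "\<dots> \<le> ln (1 / L')"
    using relative_decrease_le_ln_inverse_diff[OF assms(1) \<open>0 < L\<close>] by (simp add: lam_def)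
  finally have "lam * (1 + \<delta>) \<le> ln (1 / L')" .
  have "\<alpha> * s \<le> 2 * \<rho> * \<delta>"
  proof -
    have "9/10 \<le> \<rho> * s / (L * lam)" using lower \<open>0 < L\<close> \<open>0 < lam\<close> by (simp add: lam_def field_simps)
    then have "5/3 * (\<alpha> * s) * (9/10) \<le> 5/3 * (\<alpha> * s) * (\<rho> * s / (L * lam))"
      using assms(4,5) by (intro mult_left_mono) auto
    moreover have "0 \<le> \<alpha> * s" using assms(4,5) by simp
    ultimately have "\<alpha> * s \<le> 5/3 * (\<alpha> * s) * (\<rho> * s / (L * lam))" by linarith
    also have "\<dots> = 2 * \<rho> * ((5/6 * \<alpha> * s\<^sup>2) / (L * lam))"
      by (simp add: field_simps power2_eq_square)
    also have "\<dots> \<le> 2 * \<rho> * \<delta>"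
      unfolding \<delta>_def using descent \<open>0 < L\<close> \<open>0 < lam\<close> assms(8)
      by (intro mult_left_mono divide_right_mono) auto
    finally show ?thesis .
  qed
  have "\<rho>' \<le> \<rho> * (1 + 2 * \<delta>)"
    using norm \<open>\<alpha> * s \<le> 2 * \<rho> * \<delta>\<close> by (simp add: algebra_simps)
  then have "\<rho>' * lam\<^sup>2 \<le> \<rho> * ((1 + 2 * \<delta>) * lam\<^sup>2)"
    using mult_right_mono[of "\<rho>'" "\<rho> * (1 + 2 * \<delta>)" "lam\<^sup>2"] by (simp add: mult.assoc)
  also have "\<dots> \<le> \<rho> * (lam * (1 + \<delta>))\<^sup>2"
  proof (rule mult_left_mono)
    have "(lam * (1 + \<delta>))\<^sup>2 = (1 + 2 * \<delta>) * lam\<^sup>2 + (lam * \<delta>)\<^sup>2"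
      by (simp add: power2_eq_square algebra_simps)
    then show "(1 + 2 * \<delta>) * lam\<^sup>2 \<le> (lam * (1 + \<delta>))\<^sup>2"
      using zero_le_power2[of "lam * \<delta>"] by linarith
  qed (rule assms(8))
  also have "\<dots> \<le> \<rho> * (ln (1 / L'))\<^sup>2"
    using \<open>lam * (1 + \<delta>) \<le> ln (1 / L')\<close> \<open>0 < lam\<close> \<open>0 \<le> \<delta>\<close> assms(8)
    by (intro mult_left_mono power_mono) auto
  finally show ?thesis by (simp add: lam_def)
qed

lemma gd_invariant_step:
  fixes L L' L1 lam lam' lam1 \<rho> \<rho>' \<rho>1 Q1 Q2 \<tau> :: real
  assumes "0 < L1" and "0 < \<rho>" and "0 < \<rho>1" and "0 < lam1" and "lam1 \<le> lam" and "0 \<le> Q1"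
    and norm_inv: "\<rho> * lam1\<^sup>2 \<le> \<rho>1 * lam\<^sup>2"
    and Q2: "Q2 \<le> 125 * Q1 * L1 * lam1 ^ 4 / (216 * \<rho>1\<^sup>2)"
    and rate_inv: "(Q2 * \<tau> + 1) / L1 \<le> 1 / L"
    and rate_step: "27/40 * Q1 * lam ^ 4 / \<rho>\<^sup>2 \<le> 1 / L' - 1 / L"
    and norm_step: "\<rho>' * lam\<^sup>2 \<le> \<rho> * lam'\<^sup>2"
  shows "(Q2 * (\<tau> + 1) + 1) / L1 \<le> 1 / L'" and "\<rho>' * lam1\<^sup>2 \<le> \<rho>1 * lam'\<^sup>2"
proof -
  have "(\<rho> * lam1\<^sup>2)\<^sup>2 \<le> (\<rho>1 * lam\<^sup>2)\<^sup>2"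
    using norm_inv assms(2) by (intro power_mono) auto
  then have "lam1 ^ 4 / \<rho>1\<^sup>2 \<le> lam ^ 4 / \<rho>\<^sup>2"
    using assms(2,3) by (simp add: field_simps power_mult_distrib flip: power_mult)
  have "Q2 / L1 \<le> 125/216 * Q1 * (lam1 ^ 4 / \<rho>1\<^sup>2)"
    using divide_right_mono[OF Q2, of L1] assms(1) by simp
  also have "\<dots> \<le> 27/40 * Q1 * (lam ^ 4 / \<rho>\<^sup>2)"
    using \<open>lam1 ^ 4 / \<rho>1\<^sup>2 \<le> lam ^ 4 / \<rho>\<^sup>2\<close> assms(6) by (intro mult_mono) auto
  finally have "Q2 / L1 \<le> 1 / L' - 1 / L"
    using rate_step by simp
  then show "(Q2 * (\<tau> + 1) + 1) / L1 \<le> 1 / L'"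
    using rate_inv by (simp add: add_divide_distrib distrib_left)
  have "\<rho>' * lam1\<^sup>2 * lam\<^sup>2 \<le> \<rho> * lam1\<^sup>2 * lam'\<^sup>2"
    using mult_right_mono[OF norm_step, of "lam1\<^sup>2"] by (simp add: mult_ac)
  also have "\<dots> \<le> \<rho>1 * lam'\<^sup>2 * lam\<^sup>2"
    using mult_right_mono[OF norm_inv, of "lam'\<^sup>2"] by (simp add: mult_ac)
  finally show "\<rho>' * lam1\<^sup>2 \<le> \<rho>1 * lam'\<^sup>2"
    using assms(4,5) by simp
qed

locale sphere_data =
  fixes n p d :: nat and X :: "nat \<Rightarrow> nat \<Rightarrow> real" and Y :: "nat \<Rightarrow> real"
  assumes n_pos: "0 < n" and p_pos: "0 < p"
    and unit_inputs: "\<And>s. s < n \<Longrightarrow> (\<Sum>j<d. (X s j)\<^sup>2) = 1"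
    and labels: "\<And>s. s < n \<Longrightarrow> Y s \<in> {-1, 1}"
begin

abbreviation "Loss \<equiv> loss n p d (1 / real p) X Y"
abbreviation "margin \<theta> s \<equiv> Y s * net p d (1 / real p) \<theta> (X s)"
abbreviation "dmargin \<theta> s \<equiv> margin_grad p d (1 / real p) \<theta> (X s) (Y s)"
abbreviation "grad \<equiv> loss_grad n p d (1 / real p) X Y"

lemma bandwidth_pos: "0 < 1 / real p"
  using p_pos by simp

lemma abs_label: "s < n \<Longrightarrow> \<bar>Y s\<bar> = 1"
  using labels[of s] by auto

lemma loss_pos: "0 < Loss \<theta>"
  unfolding loss_eq_mean_logistic_loss using n_pos logistic_loss_pos
  by (intro mult_pos_pos sum_pos) auto

lemma mean_weight_le_loss: "(1 / real n) * (\<Sum>s<n. logistic_weight (margin \<theta> s)) \<le> Loss \<theta>"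
  unfolding loss_eq_mean_logistic_loss
  by (intro mult_left_mono sum_mono logistic_weight_le_loss) auto

lemma logistic_margin_le:
  assumes "s < n"
  shows "logistic_loss (margin \<theta> s) \<le> real n * Loss \<theta>"
proof -
  have "logistic_loss (margin \<theta> s) \<le> (\<Sum>s<n. logistic_loss (margin \<theta> s))"
    using assms by (intro member_le_sum) (auto simp: less_imp_le logistic_loss_pos)
  then show ?thesis
    unfolding loss_eq_mean_logistic_loss using n_pos by simp
qed

lemma param_inner_grad:
  "param_inner p d (grad \<theta>) a =
     - (1 / real n) * (\<Sum>s<n. logistic_weight (margin \<theta> s) * param_inner p d (dmargin \<theta> s) a)"
  unfolding param_inner_def loss_grad_def
  by (simp add: sum_distrib_left sum_distrib_right mult_ac sum.swap[where A = "{..<n}"])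

lemma frob_grad_le: "frob p d (grad \<theta>) \<le> 2 * sqrt (real p) * Loss \<theta>"
proof -
  define G where "G = frob p d (grad \<theta>)"
  have "G\<^sup>2 = - (1 / real n) * (\<Sum>s<n. logistic_weight (margin \<theta> s) * param_inner p d (dmargin \<theta> s) (grad \<theta>))"
    unfolding G_def param_inner_self[symmetric] param_inner_grad ..
  also have "\<dots> \<le> (1 / real n) * (\<Sum>s<n. logistic_weight (margin \<theta> s) * (2 * sqrt (real p) * G))"
  proof -
    have "- param_inner p d (dmargin \<theta> s) (grad \<theta>) \<le> 2 * sqrt (real p) * G" if "s < n" for s
    proof -
      have "\<bar>param_inner p d (dmargin \<theta> s) (grad \<theta>)\<bar> \<le> 2 * sqrt (real p) * G"
        using abs_param_inner_le[THEN order_trans] G_def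
          frob_margin_grad_le[OF bandwidth_pos unit_inputs[OF that] abs_label[OF that]]
        by (simp add: mult_right_mono)
      then show ?thesis by linarith
    qed
    then show ?thesis
      unfolding mult_minus_left sum_negf[symmetric] mult_minus_right[symmetric]
      by (intro mult_left_mono sum_mono) (auto simp: logistic_weight_nonneg)
  qed
  also have "\<dots> = ((1 / real n) * (\<Sum>s<n. logistic_weight (margin \<theta> s))) * (2 * sqrt (real p) * G)"
    by (simp add: sum_distrib_right)
  also have "\<dots> \<le> Loss \<theta> * (2 * sqrt (real p) * G)"
    by (intro mult_right_mono mean_weight_le_loss) (simp add: G_def)
  finally have "G * G \<le> (2 * sqrt (real p) * Loss \<theta>) * G"
    by (simp add: power2_eq_square mult_ac)
  moreover have "0 \<le> 2 * sqrt (real p) * Loss \<theta>"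
    using loss_pos[of \<theta>] by simp
  moreover have "0 \<le> G" by (simp add: G_def)
  ultimately show ?thesis
    unfolding G_def[symmetric]
    by (cases "G = 0") (auto intro: mult_right_le_imp_le)
qed

lemma neg_param_inner_grad_ge:
  "(1 / real n) * (\<Sum>s<n. logistic_weight (margin \<theta> s) * (margin \<theta> s - 1))
     \<le> - param_inner p d (grad \<theta>) \<theta>"
proof -
  have "margin \<theta> s - 1 \<le> param_inner p d (dmargin \<theta> s) \<theta>" if "s < n" for s
    using margin_le_param_inner_margin_grad[OF bandwidth_pos abs_label[OF that], where p = p and d = d
        and \<theta> = \<theta> and x = "X s"] p_pos
    by simp
  then show ?thesis
    unfolding param_inner_grad mult_minus_left minus_minus
    by (intro mult_left_mono sum_mono) (auto simp: logistic_weight_nonneg)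
qed

lemma logistic_margin_gradient_step:
  assumes s: "s < n" and "0 \<le> \<alpha>" and small: "real p * \<alpha> * Loss \<theta> \<le> 1/30"
    and upd: "\<forall>i<2*p. \<forall>j\<le>d. \<theta>' i j = \<theta> i j - \<alpha> * grad \<theta> i j"
  shows "logistic_loss (margin \<theta>' s) - logistic_loss (margin \<theta> s)
    \<le> logistic_weight (margin \<theta> s) *
       (\<alpha> * param_inner p d (dmargin \<theta> s) (grad \<theta>) + 5 * real p * \<alpha>\<^sup>2 * (frob p d (grad \<theta>))\<^sup>2)"
proof -
  define G where "G = frob p d (grad \<theta>)"
  define \<delta> where "\<delta> = margin \<theta>' s - margin \<theta> s"
  have step: "frob p d (\<lambda>i j. \<theta>' i j - \<theta> i j) = \<alpha> * G"
    and lin: "param_inner p d (dmargin \<theta> s) (\<lambda>i j. \<theta>' i j - \<theta> i j) = - \<alpha> * param_inner p d (dmargin \<theta> s) (grad \<theta>)"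
    using gradient_step_diff[OF upd \<open>0 \<le> \<alpha>\<close>] by (simp_all add: G_def)
  have "\<bar>\<delta> + \<alpha> * param_inner p d (dmargin \<theta> s) (grad \<theta>)\<bar> \<le> real p * (\<alpha> * G)\<^sup>2"
    using margin_taylor[OF bandwidth_pos unit_inputs[OF s] abs_label[OF s], where p = p and \<theta>' = \<theta>' and \<theta> = \<theta>]
    unfolding step lin \<delta>_def by (simp add: mult.commute)
  then have taylor: "- \<delta> \<le> \<alpha> * param_inner p d (dmargin \<theta> s) (grad \<theta>) + real p * \<alpha>\<^sup>2 * G\<^sup>2"
    by (simp add: abs_le_iff power_mult_distrib)
  have lip: "\<bar>\<delta>\<bar> \<le> 2 * sqrt (real p) * (\<alpha> * G)"
    using margin_lipschitz[OF bandwidth_pos unit_inputs[OF s] abs_label[OF s], where p = p and \<theta>' = \<theta>' and \<theta> = \<theta>]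
    unfolding step \<delta>_def .
  have "\<alpha> * G \<le> \<alpha> * (2 * sqrt (real p) * Loss \<theta>)"
    using mult_left_mono[OF frob_grad_le[of \<theta>] \<open>0 \<le> \<alpha>\<close>] by (simp add: G_def)
  then have "2 * sqrt (real p) * (\<alpha> * G) \<le> 2 * sqrt (real p) * (\<alpha> * (2 * sqrt (real p) * Loss \<theta>))"
    by (rule mult_left_mono) simp
  also have "\<dots> = 4 * (real p * \<alpha> * Loss \<theta>)" by simp
  finally have "\<bar>\<delta>\<bar> \<le> 1" using lip small by linarith
  have "\<delta>\<^sup>2 \<le> (2 * sqrt (real p) * (\<alpha> * G))\<^sup>2"
    using power_mono[OF lip abs_ge_zero, of 2] by simp
  then have "\<delta>\<^sup>2 \<le> 4 * real p * \<alpha>\<^sup>2 * G\<^sup>2"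
    by (simp add: power_mult_distrib)
  have "logistic_loss (margin \<theta>' s) - logistic_loss (margin \<theta> s) \<le> logistic_weight (margin \<theta> s) * (- \<delta> + \<delta>\<^sup>2)"
    using logistic_loss_step[of \<delta> "margin \<theta> s"] \<open>\<bar>\<delta>\<bar> \<le> 1\<close> by (simp add: \<delta>_def)
  also have "\<dots> \<le> logistic_weight (margin \<theta> s) *
      (\<alpha> * param_inner p d (dmargin \<theta> s) (grad \<theta>) + 5 * real p * \<alpha>\<^sup>2 * G\<^sup>2)"
    using taylor \<open>\<delta>\<^sup>2 \<le> 4 * real p * \<alpha>\<^sup>2 * G\<^sup>2\<close> by (intro mult_left_mono logistic_weight_nonneg) auto
  finally show ?thesis by (simp add: G_def)
qed

lemma loss_descent:
  assumes "0 \<le> \<alpha>" and small: "real p * \<alpha> * Loss \<theta> \<le> 1/30"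
    and upd: "\<forall>i<2*p. \<forall>j\<le>d. \<theta>' i j = \<theta> i j - \<alpha> * grad \<theta> i j"
  shows "Loss \<theta>' \<le> Loss \<theta> - 5/6 * \<alpha> * (frob p d (grad \<theta>))\<^sup>2"
proof -
  define G where "G = frob p d (grad \<theta>)"
  define w where "w s = logistic_weight (margin \<theta> s)" for s
  define B where "B = 5 * real p * \<alpha>\<^sup>2 * G\<^sup>2"
  have "Loss \<theta>' - Loss \<theta> = (1 / real n) * (\<Sum>s<n. logistic_loss (margin \<theta>' s) - logistic_loss (margin \<theta> s))"
    unfolding loss_eq_mean_logistic_loss by (simp add: sum_subtractf right_diff_distrib)
  also have "\<dots> \<le> (1 / real n) * (\<Sum>s<n. w s * (\<alpha> * param_inner p d (dmargin \<theta> s) (grad \<theta>) + B))"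
    using logistic_margin_gradient_step[OF _ assms] unfolding w_def B_def G_def
    by (intro mult_left_mono sum_mono) auto
  also have "\<dots> = - \<alpha> * param_inner p d (grad \<theta>) (grad \<theta>) + B * ((1 / real n) * (\<Sum>s<n. w s))"
    unfolding param_inner_grad w_def
    by (simp add: distrib_left sum.distrib sum_distrib_left sum_distrib_right mult_ac)
  also have "\<dots> \<le> - \<alpha> * G\<^sup>2 + B * Loss \<theta>"
    using mult_left_mono[OF mean_weight_le_loss[of \<theta>], of B]
    unfolding param_inner_self G_def[symmetric] w_def by (simp add: B_def)
  also have "\<dots> = - \<alpha> * G\<^sup>2 * (1 - 5 * (real p * \<alpha> * Loss \<theta>))"
    by (simp add: B_def algebra_simps power2_eq_square)
  also have "\<dots> \<le> - 5/6 * \<alpha> * G\<^sup>2"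
  proof -
    have "5/6 \<le> 1 - 5 * (real p * \<alpha> * Loss \<theta>)" using small by simp
    from mult_left_mono[OF this, of "\<alpha> * G\<^sup>2"] show ?thesis
      using \<open>0 \<le> \<alpha>\<close> by simp
  qed
  finally show ?thesis by (simp add: G_def)
qed

lemma loss_ln_le_frob_mult_frob_grad:
  assumes "2 \<le> n" and "Loss \<theta> \<le> 1 / real n powr 100"
  shows "9/10 * Loss \<theta> * ln (1 / Loss \<theta>) \<le> frob p d \<theta> * frob p d (grad \<theta>)"
proof -
  define lam where "lam = ln (1 / Loss \<theta>)"
  define \<epsilon> where "\<epsilon> = real n * Loss \<theta>"
  note bounds = small_loss_bounds[OF assms(1) loss_pos assms(2), folded lam_def \<epsilon>_def]
  have "Loss \<theta> \<le> \<epsilon>"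
    using loss_pos[of \<theta>] assms(1) by (simp add: \<epsilon>_def)
  then have "0 \<le> lam"
    using loss_pos[of \<theta>] bounds(1) by (simp add: lam_def)
  have each: "9/10 * lam * logistic_loss (margin \<theta> s) \<le> logistic_weight (margin \<theta> s) * (margin \<theta> s - 1)"
    if "s < n" for s
  proof (rule logistic_loss_le_weight_mult_margin)
    show le: "logistic_loss (margin \<theta> s) \<le> \<epsilon>"
      unfolding \<epsilon>_def by (rule logistic_margin_le[OF that])
    have "- margin \<theta> s \<le> ln (2 * \<epsilon>)"
      using exp_neg_le_of_logistic_loss_le[OF le] bounds(1) loss_pos[of \<theta>] n_pos
      by (subst ln_ge_iff) (auto simp: \<epsilon>_def)
    then show "95/100 * lam \<le> margin \<theta> s - 1"
      using bounds(3) by linarith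
  qed (use bounds \<open>0 \<le> lam\<close> in auto)
  have "9/10 * Loss \<theta> * lam = (1 / real n) * (\<Sum>s<n. 9/10 * lam * logistic_loss (margin \<theta> s))"
    unfolding loss_eq_mean_logistic_loss by (simp add: sum_distrib_left mult_ac)
  also have "\<dots> \<le> (1 / real n) * (\<Sum>s<n. logistic_weight (margin \<theta> s) * (margin \<theta> s - 1))"
    using each by (intro mult_left_mono sum_mono) auto
  also have "\<dots> \<le> - param_inner p d (grad \<theta>) \<theta>"
    by (rule neg_param_inner_grad_ge)
  also have "\<dots> \<le> frob p d \<theta> * frob p d (grad \<theta>)"
    using abs_param_inner_le[of p d "grad \<theta>" \<theta>] by (simp add: mult.commute)
  finally show ?thesis by (simp add: lam_def)
qed

lemma frob_pos_of_small_loss: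
  assumes "2 \<le> n" and "Loss \<theta> \<le> 1 / real n powr 100"
  shows "0 < frob p d \<theta>"
proof -
  have "Loss \<theta> < 1"
    by (rule small_loss_bounds(2)[OF assms(1) loss_pos assms(2)])
  then have "0 < ln (1 / Loss \<theta>)"
    using loss_pos[of \<theta>] by simp
  then have "0 < 9/10 * Loss \<theta> * ln (1 / Loss \<theta>)"
    using loss_pos[of \<theta>] by simp
  then show ?thesis
    using loss_ln_le_frob_mult_frob_grad[OF assms] frob_nonneg[of p d \<theta>]
    by (cases "frob p d \<theta> = 0") (auto simp: less_eq_real_def)
qed

lemma gradient_step_progress:
  assumes "2 \<le> n" and small: "Loss \<theta> \<le> 1 / real n powr 100"
    and "0 < Q1" and "Q1 \<le> exp 2 / (120 * real p)"
    and upd: "\<forall>i<2*p. \<forall>j\<le>d. \<theta>' i j = \<theta> i j - Q1 * (ln (1 / Loss \<theta>))\<^sup>2 * grad \<theta> i j"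
  shows "27/40 * Q1 * (ln (1 / Loss \<theta>)) ^ 4 / (frob p d \<theta>)\<^sup>2 \<le> 1 / Loss \<theta>' - 1 / Loss \<theta>"
    and "frob p d \<theta>' * (ln (1 / Loss \<theta>))\<^sup>2 \<le> frob p d \<theta> * (ln (1 / Loss \<theta>'))\<^sup>2"
proof -
  define \<alpha> where "\<alpha> = Q1 * (ln (1 / Loss \<theta>))\<^sup>2"
  define G where "G = frob p d (grad \<theta>)"
  have "Loss \<theta> < 1"
    by (rule small_loss_bounds(2)[OF assms(1) loss_pos small])
  have "0 \<le> \<alpha>" using assms(3) by (simp add: \<alpha>_def)
  have "real p * \<alpha> * Loss \<theta> = real p * Q1 * (Loss \<theta> * (ln (1 / Loss \<theta>))\<^sup>2)"
    by (simp add: \<alpha>_def)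
  also have "\<dots> \<le> real p * (exp 2 / (120 * real p)) * (4 * exp (- 2))"
  proof (rule mult_mono)
    show "real p * Q1 \<le> real p * (exp 2 / (120 * real p))"
      using assms(4) by (rule mult_left_mono) simp
    show "Loss \<theta> * (ln (1 / Loss \<theta>))\<^sup>2 \<le> 4 * exp (- 2)"
      using mult_ln_inverse_sq_le[OF loss_pos] \<open>Loss \<theta> < 1\<close> by simp
  qed (use loss_pos[of \<theta>] in auto)
  also have "\<dots> = 1/30"
    using p_pos by (simp add: exp_minus field_simps)
  finally have descent: "Loss \<theta>' \<le> Loss \<theta> - 5/6 * \<alpha> * G\<^sup>2"
    using loss_descent[OF \<open>0 \<le> \<alpha>\<close> _ upd[folded \<alpha>_def]] by (simp add: G_def)
  have lower: "9/10 * Loss \<theta> * ln (1 / Loss \<theta>) \<le> frob p d \<theta> * G"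
    unfolding G_def by (rule loss_ln_le_frob_mult_frob_grad[OF assms(1) small])
  have "0 \<le> ln (1 / Loss \<theta>)"
    using \<open>Loss \<theta> < 1\<close> loss_pos[of \<theta>] by (simp add: ln_div)
  show "27/40 * Q1 * (ln (1 / Loss \<theta>)) ^ 4 / (frob p d \<theta>)\<^sup>2 \<le> 1 / Loss \<theta>' - 1 / Loss \<theta>"
    using inverse_loss_increment[OF loss_pos descent \<alpha>_def _ lower] assms(3)
      frob_pos_of_small_loss[OF assms(1) small] \<open>0 \<le> ln (1 / Loss \<theta>)\<close>
    by simp
  show "frob p d \<theta>' * (ln (1 / Loss \<theta>))\<^sup>2 \<le> frob p d \<theta> * (ln (1 / Loss \<theta>'))\<^sup>2"
    using ln_inverse_sq_growth[OF loss_pos \<open>Loss \<theta> < 1\<close> descent \<open>0 \<le> \<alpha>\<close> _ lower]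
      frob_gradient_step_le[OF upd[folded \<alpha>_def] \<open>0 \<le> \<alpha>\<close>]
    by (simp add: G_def)
qed

lemma gd_invariant_preserved:
  assumes n2: "2 \<le> n" and small: "Loss \<theta>1 \<le> 1 / real n powr 100"
    and "0 < Q1" and Q1: "Q1 \<le> exp 2 / (120 * real p)" and "0 \<le> Q2" and "0 \<le> \<tau>"
    and Q2: "Q2 \<le> Qt2 Q1 (Loss \<theta>1) (frob p d \<theta>1)"
    and upd: "\<forall>i<2*p. \<forall>j\<le>d. \<theta>' i j = \<theta> i j - Q1 * (ln (1 / Loss \<theta>))\<^sup>2 * grad \<theta> i j"
    and rate: "(Q2 * \<tau> + 1) / Loss \<theta>1 \<le> 1 / Loss \<theta>"
    and norm: "frob p d \<theta> * (ln (1 / Loss \<theta>1))\<^sup>2 \<le> frob p d \<theta>1 * (ln (1 / Loss \<theta>))\<^sup>2"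
  shows "(Q2 * (\<tau> + 1) + 1) / Loss \<theta>1 \<le> 1 / Loss \<theta>'"
    and "frob p d \<theta>' * (ln (1 / Loss \<theta>1))\<^sup>2 \<le> frob p d \<theta>1 * (ln (1 / Loss \<theta>'))\<^sup>2"
proof -
  have "0 < ln (1 / Loss \<theta>1)"
    using small_loss_bounds(2)[OF n2 loss_pos small] loss_pos[of \<theta>1] by simp
  have "1 / Loss \<theta>1 \<le> (Q2 * \<tau> + 1) / Loss \<theta>1"
    using \<open>0 \<le> Q2\<close> \<open>0 \<le> \<tau>\<close> loss_pos[of \<theta>1] by (intro divide_right_mono) auto
  then have inv_le: "1 / Loss \<theta>1 \<le> 1 / Loss \<theta>"
    using rate by linarith
  then have "ln (1 / Loss \<theta>1) \<le> ln (1 / Loss \<theta>)"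
    using loss_pos[of \<theta>1] loss_pos[of \<theta>] by (subst ln_le_cancel_iff) auto
  have "Loss \<theta> \<le> Loss \<theta>1"
    using inv_le loss_pos[of \<theta>1] loss_pos[of \<theta>] by (simp add: field_simps)
  with small have small': "Loss \<theta> \<le> 1 / real n powr 100" by simp
  show "(Q2 * (\<tau> + 1) + 1) / Loss \<theta>1 \<le> 1 / Loss \<theta>'"
    and "frob p d \<theta>' * (ln (1 / Loss \<theta>1))\<^sup>2 \<le> frob p d \<theta>1 * (ln (1 / Loss \<theta>'))\<^sup>2"
    using gd_invariant_step[OF loss_pos frob_pos_of_small_loss[OF n2 small']
        frob_pos_of_small_loss[OF n2 small] \<open>0 < ln (1 / Loss \<theta>1)\<close>
        \<open>ln (1 / Loss \<theta>1) \<le> ln (1 / Loss \<theta>)\<close> _ norm _ rate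
        gradient_step_progress[OF n2 small' \<open>0 < Q1\<close> Q1 upd]] Q2 \<open>0 < Q1\<close>
    by (simp_all add: Qt2_def)
qed

lemma gd_loss_rate:
  fixes \<theta> :: "nat \<Rightarrow> nat \<Rightarrow> nat \<Rightarrow> real"
  assumes n2: "2 \<le> n" and small: "Loss (\<theta> 1) \<le> 1 / real n powr 100"
    and "0 < Q1" and Q1: "Q1 \<le> Qt1 p (Loss (\<theta> 1)) (frob p d (\<theta> 1))"
    and "0 < Q2" and Q2: "Q2 \<le> Qt2 Q1 (Loss (\<theta> 1)) (frob p d (\<theta> 1))"
    and gd: "\<forall>t\<ge>1. \<forall>i<2*p. \<forall>j\<le>d.
      \<theta> (Suc t) i j = \<theta> t i j - Q1 * (ln (1 / Loss (\<theta> t)))\<^sup>2 * partial Loss (\<theta> t) i j"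
    and "1 \<le> t"
  shows "Loss (\<theta> t) \<le> Loss (\<theta> 1) / (Q2 * (real t - 1) + 1)"
proof -
  have Q1': "Q1 \<le> exp 2 / (120 * real p)"
    using Q1 unfolding Qt1_def by (rule order_trans) (rule Min_le, auto)
  have "(Q2 * (real t - 1) + 1) / Loss (\<theta> 1) \<le> 1 / Loss (\<theta> t)
      \<and> frob p d (\<theta> t) * (ln (1 / Loss (\<theta> 1)))\<^sup>2 \<le> frob p d (\<theta> 1) * (ln (1 / Loss (\<theta> t)))\<^sup>2"
    using \<open>1 \<le> t\<close>
  proof (induction t rule: nat_induct_at_least)
    case (Suc t)
    have "\<forall>i<2*p. \<forall>j\<le>d. \<theta> (Suc t) i j = \<theta> t i j - Q1 * (ln (1 / Loss (\<theta> t)))\<^sup>2 * grad (\<theta> t) i j"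
      using gd \<open>1 \<le> t\<close> partial_loss_eq_loss_grad[OF bandwidth_pos] by auto
    from gd_invariant_preserved[OF n2 small \<open>0 < Q1\<close> Q1' _ _ Q2 this, of "real t - 1"]
    show ?case
      using Suc \<open>0 < Q2\<close> by simp
  qed simp
  moreover have "0 < Q2 * (real t - 1) + 1"
    using \<open>0 < Q2\<close> \<open>1 \<le> t\<close> by (simp add: add_nonneg_pos)
  ultimately show ?thesis
    using loss_pos[of "\<theta> 1"] loss_pos[of "\<theta> t"] by (simp add: field_simps)
qed

end

theorem theorem1:
  shows "\<exists>C1 > (0::real). \<forall>(n::nat) (p::nat) (d::nat) (X::nat \<Rightarrow> nat \<Rightarrow> real) (Y::nat \<Rightarrow> real)
            (\<theta>::nat \<Rightarrow> nat \<Rightarrow> nat \<Rightarrow> real) (Q1::real) (Q2::real).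
      2 \<le> n \<longrightarrow> 1 \<le> p \<longrightarrow> 1 \<le> d \<longrightarrow>
      (\<forall>s<n. (\<Sum>j<d. (X s j)\<^sup>2) = 1 \<and> Y s \<in> {-1, 1}) \<longrightarrow>
      (let h = 1 / real p; L = loss n p d h X Y; L1 = L (\<theta> 1); V = frob p d (\<theta> 1) in
        0 < Q1 \<longrightarrow> Q1 \<le> Qt1 p L1 V \<longrightarrow> 0 < Q2 \<longrightarrow> Q2 \<le> Qt2 Q1 L1 V \<longrightarrow>
        (\<forall>t\<ge>1. \<forall>i<2*p. \<forall>j\<le>d.
            \<theta> (Suc t) i j = \<theta> t i j - Q1 * (ln (1 / L (\<theta> t)))\<^sup>2 * partial L (\<theta> t) i j) \<longrightarrow>
        L1 \<le> 1 / real n powr (1 + C1) \<longrightarrow>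
        (\<forall>t\<ge>1. L (\<theta> t) \<le> L1 / (Q2 * (real t - 1) + 1)))"
proof -
  have data: "sphere_data n p d X Y" if "2 \<le> n" and "1 \<le> p" and "\<forall>s<n. (\<Sum>j<d. (X s j)\<^sup>2) = 1 \<and> Y s \<in> {-1, 1}"
    for n p d :: nat and X :: "nat \<Rightarrow> nat \<Rightarrow> real" and Y :: "nat \<Rightarrow> real"
    using that by unfold_locales auto
  show ?thesis
    unfolding Let_def
    by (intro exI[of _ 99] conjI allI impI, simp) (rule sphere_data.gd_loss_rate, auto simp: data)
qed

end
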